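(* Let $G \leq S_n$, and let $G \wr S_2$ be the wreath product of $G$ with the symmetric group $S_2$. Then \[ i(P(G \wr S_2),t) = \sum_{k=0}^{t} \big(i(P(G),k)\big)^2 \cdot \big(i(P(G),t-k)\big)^2 \] for any integer $t \geq 2$.
   Context: Permutations in $S_n$ are identified with $n \times n$ permutation matrices ($g$ corresponds to the matrix with $(i,j)$-entry $1$ if $g(i)=j$ and $0$ otherwise). For a subgroup $G \leq S_n$, the permutation polytope is $P(G) = \mathrm{conv}\{g : g \in G\}$. For a lattice polytope $P \subset \mathbb{R}^N$, its Ehrhart polynomial $i(P,t)$ counts the number of integer points in the dilation $tP = \{tX : X \in P\}$. The wreath product $G \wr S_2$ is the group $\{(g,h) : g \in G^2, h \in S_2\}$ with multiplication $((g'_1,g'_2),h')\cdot((g_1,g_2),h) = ((g'_{h'(1)}g_1, g'_{h'(2)}g_2), h'h)$; as a permutation group on $2n$ points, the vertices of $P(G \wr S_2)$ are the $2n \times 2n$ block matrices $\begin{pmatrix} X_1 & 0 \\ 0 & X_2\end{pmatrix}$ and $\begin{pmatrix} 0 & X_1 \\ X_2 & 0\end{pmatrix}$ with $X_1, X_2$ vertices of $P(G)$. *)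

theory Defs
  imports "HOL-Analysis.Analysis" "HOL-Algebra.Bij"
begin

text \<open>Permutations of the finite point set 'n (of size n) play the role of S_n.
  The permutation matrix of g has (i,j)-entry 1 iff g i = j.\<close>
definition perm_mat :: "('n::finite \<Rightarrow> 'n) \<Rightarrow> real ^ 'n ^ 'n" where
  "perm_mat g = (\<chi> i j. if g i = j then 1 else 0)"

definition perm_polytope :: "('n::finite \<Rightarrow> 'n) set \<Rightarrow> (real ^ 'n ^ 'n) set" where
  "perm_polytope G = convex hull (perm_mat ` G)"

definition ehrhart :: "'a::euclidean_space set \<Rightarrow> nat \<Rightarrow> nat" where
  "ehrhart P t = card {x \<in> (\<lambda>y. real t *\<^sub>R y) ` P. \<forall>b\<in>Basis. x \<bullet> b \<in> \<int>}"

text \<open>The wreath product G wr S_2 as a permutation group on the 2n points 'n + 'n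
  (Inl = first block, Inr = second block): ((g1,g2),id) acts blockwise, and
  ((g1,g2),swap) sends Inl i to Inr (g1 i) and Inr i to Inl (g2 i).\<close>
definition wreath_S2 :: "('n \<Rightarrow> 'n) set \<Rightarrow> ('n + 'n \<Rightarrow> 'n + 'n) set" where
  "wreath_S2 G =
     {w. \<exists>g1\<in>G. \<exists>g2\<in>G. \<exists>h::bool.
        w = (\<lambda>x. case x of
               Inl i \<Rightarrow> (if h then Inr (g1 i) else Inl (g1 i))
             | Inr i \<Rightarrow> (if h then Inl (g2 i) else Inr (g2 i)))}"

end

theory Submission imports Defs begin

text \<open>A vertex of \<open>P(G \<wr> S\<^sub>2)\<close> is block diagonal or block antidiagonal with blocks in
  \<open>P(G)\<close>, so the polytope is the join of \<open>P(G) \<times> P(G)\<close> placed on the diagonal blocks and a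
  second copy placed on the antidiagonal blocks. A point of the \<open>t\<close>-th dilate therefore has
  diagonal blocks \<open>u t X\<^sub>1, u t X\<^sub>2\<close> and antidiagonal blocks \<open>v t Y\<^sub>1, v t Y\<^sub>2\<close> with
  \<open>u + v = 1\<close> and \<open>X\<^sub>i, Y\<^sub>i \<in> P(G)\<close>. Since every row of a point of \<open>P(G)\<close> sums to 1, integrality
  forces \<open>k = u t\<close> to be an integer in \<open>[0, t]\<close>, and the lattice points split by \<open>k\<close> into
  products of two lattice points of \<open>k P(G)\<close> and two of \<open>(t - k) P(G)\<close>.\<close>

definition block_mat ::
    "real^'n^'n \<Rightarrow> real^'n^'n \<Rightarrow> real^'n^'n \<Rightarrow> real^'n^'n \<Rightarrow> real^('n+'n)^('n+'n)" where
  "block_mat A B C E = (\<chi> i j. case i of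
       Inl a \<Rightarrow> (case j of Inl b \<Rightarrow> A$a$b | Inr b \<Rightarrow> B$a$b)
     | Inr a \<Rightarrow> (case j of Inl b \<Rightarrow> C$a$b | Inr b \<Rightarrow> E$a$b))"

lemma block_mat_nth [simp]:
  "block_mat A B C E $ Inl a $ Inl b = A$a$b" "block_mat A B C E $ Inl a $ Inr b = B$a$b"
  "block_mat A B C E $ Inr a $ Inl b = C$a$b" "block_mat A B C E $ Inr a $ Inr b = E$a$b"
  by (simp_all add: block_mat_def)

lemma block_mat_eq_iff:
  "block_mat A B C E = block_mat A' B' C' E' \<longleftrightarrow> A = A' \<and> B = B' \<and> C = C' \<and> E = E'"
  by (metis block_mat_nth vec_eq_iff)

lemma block_mat_add:
  "block_mat A B C E + block_mat A' B' C' E' = block_mat (A + A') (B + B') (C + C') (E + E')"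
  by (simp add: vec_eq_iff block_mat_def split: sum.split)

lemma scaleR_block_mat:
  "c *\<^sub>R block_mat A B C E = block_mat (c *\<^sub>R A) (c *\<^sub>R B) (c *\<^sub>R C) (c *\<^sub>R E)"
  by (simp add: vec_eq_iff block_mat_def split: sum.split)

lemma block_mat_integral_iff:
  "(\<forall>i j. block_mat A B C E $ i $ j \<in> \<int>) \<longleftrightarrow>
     (\<forall>i j. A$i$j \<in> \<int>) \<and> (\<forall>i j. B$i$j \<in> \<int>) \<and> (\<forall>i j. C$i$j \<in> \<int>) \<and> (\<forall>i j. E$i$j \<in> \<int>)"
  by (metis block_mat_nth sum.exhaust)

definition block_diag :: "(real^'n^'n) \<times> (real^'n^'n) \<Rightarrow> real^('n+'n)^('n+'n)" where
  "block_diag = (\<lambda>(A, E). block_mat A 0 0 E)"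

definition block_antidiag :: "(real^'n^'n) \<times> (real^'n^'n) \<Rightarrow> real^('n+'n)^('n+'n)" where
  "block_antidiag = (\<lambda>(B, C). block_mat 0 B C 0)"

lemma linear_block_diag: "linear block_diag"
  by (rule linearI) (auto simp: block_diag_def block_mat_add scaleR_block_mat)

lemma linear_block_antidiag: "linear block_antidiag"
  by (rule linearI) (auto simp: block_antidiag_def block_mat_add scaleR_block_mat)

lemma convex_hull_block_diag:
  "convex hull (block_diag ` (S \<times> T)) = block_diag ` ((convex hull S) \<times> (convex hull T))"
  by (simp add: convex_hull_linear_image[OF linear_block_diag, symmetric] convex_hull_Times)

lemma convex_hull_block_antidiag:
  "convex hull (block_antidiag ` (S \<times> T)) = block_antidiag ` ((convex hull S) \<times> (convex hull T))"
  by (simp add: convex_hull_linear_image[OF linear_block_antidiag, symmetric] convex_hull_Times)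

lemma scaleR_block_diag_add_block_antidiag:
  "u *\<^sub>R block_diag (X1, X2) + v *\<^sub>R block_antidiag (Y1, Y2) =
     block_mat (u *\<^sub>R X1) (v *\<^sub>R Y1) (v *\<^sub>R Y2) (u *\<^sub>R X2)"
  by (simp add: block_diag_def block_antidiag_def scaleR_block_mat block_mat_add)

lemma perm_polytope_row_stochastic:
  assumes "X \<in> perm_polytope G"
  shows "(\<Sum>j\<in>UNIV. X$i$j) = 1 \<and> 0 \<le> X$i$j \<and> X$i$j \<le> 1"
proof -
  let ?C = "{X::real^'n^'n. \<forall>i. (\<Sum>j\<in>UNIV. X$i$j) = 1 \<and> (\<forall>j. 0 \<le> X$i$j \<and> X$i$j \<le> 1)}"
  have "convex ?C"
    by (rule convexI) (auto simp: sum.distrib sum_distrib_left[symmetric] convex_bound_le)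
  moreover have "perm_mat ` G \<subseteq> ?C"
    by (auto simp: perm_mat_def)
  ultimately have "perm_polytope G \<subseteq> ?C"
    unfolding perm_polytope_def by (rule hull_minimal[rotated])
  then show ?thesis using assms by blast
qed

lemma integral_scale_of_perm_polytope:
  assumes "X \<in> perm_polytope G" and "\<forall>i j. (a *\<^sub>R X)$i$j \<in> \<int>"
  shows "a \<in> \<int>"
proof -
  have "a = (\<Sum>j\<in>UNIV. (a *\<^sub>R X)$i$j)" for i
    using perm_polytope_row_stochastic[OF assms(1), of i] by (simp add: sum_distrib_left[symmetric])
  moreover have "(\<Sum>j\<in>UNIV. (a *\<^sub>R X)$i$j) \<in> \<int>" for i
    using assms(2) by (intro Ints_sum) blast
  ultimately show ?thesis by metis
qed

definition wreath_elem :: "('n \<Rightarrow> 'n) \<Rightarrow> ('n \<Rightarrow> 'n) \<Rightarrow> bool \<Rightarrow> 'n + 'n \<Rightarrow> 'n + 'n" where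
  "wreath_elem g1 g2 h = (\<lambda>x. case x of
       Inl i \<Rightarrow> (if h then Inr (g1 i) else Inl (g1 i))
     | Inr i \<Rightarrow> (if h then Inl (g2 i) else Inr (g2 i)))"

lemma wreath_S2_eq: "wreath_S2 G = {wreath_elem g1 g2 h | g1 g2 h. g1 \<in> G \<and> g2 \<in> G}"
  unfolding wreath_S2_def wreath_elem_def by blast

lemma perm_mat_wreath_elem:
  "perm_mat (wreath_elem g1 g2 h) =
     (if h then block_antidiag (perm_mat g1, perm_mat g2) else block_diag (perm_mat g1, perm_mat g2))"
  by (cases h) (simp_all add: vec_eq_iff block_mat_def block_diag_def block_antidiag_def
      perm_mat_def wreath_elem_def split: sum.split)

lemma perm_mat_wreath_S2:
  "perm_mat ` wreath_S2 G =
     block_diag ` (perm_mat ` G \<times> perm_mat ` G) \<union> block_antidiag ` (perm_mat ` G \<times> perm_mat ` G)"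
  (is "_ = ?D \<union> ?A")
proof (intro equalityI subsetI)
  fix y assume "y \<in> perm_mat ` wreath_S2 G"
  then obtain g1 g2 h where "g1 \<in> G" "g2 \<in> G" "y = perm_mat (wreath_elem g1 g2 h)"
    unfolding wreath_S2_eq by blast
  then show "y \<in> ?D \<union> ?A" by (cases h) (auto simp: perm_mat_wreath_elem)
next
  fix y assume "y \<in> ?D \<union> ?A"
  then obtain g1 g2 h where "g1 \<in> G" "g2 \<in> G" "y = perm_mat (wreath_elem g1 g2 h)"
  proof (elim UnE imageE)
    fix p assume "p \<in> perm_mat ` G \<times> perm_mat ` G" "y = block_diag p"
    then show thesis using that[of _ _ False] by (auto simp: perm_mat_wreath_elem)
  next
    fix p assume "p \<in> perm_mat ` G \<times> perm_mat ` G" "y = block_antidiag p"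
    then show thesis using that[of _ _ True] by (auto simp: perm_mat_wreath_elem)
  qed
  then show "y \<in> perm_mat ` wreath_S2 G" unfolding wreath_S2_eq by blast
qed

lemma perm_polytope_wreath_S2:
  assumes "G \<noteq> {}"
  shows "perm_polytope (wreath_S2 G) =
    {block_mat (u *\<^sub>R X1) (v *\<^sub>R Y1) (v *\<^sub>R Y2) (u *\<^sub>R X2) | u v X1 X2 Y1 Y2.
       u \<ge> 0 \<and> v \<ge> 0 \<and> u + v = 1 \<and> X1 \<in> perm_polytope G \<and> X2 \<in> perm_polytope G
       \<and> Y1 \<in> perm_polytope G \<and> Y2 \<in> perm_polytope G}"
proof -
  let ?P = "perm_polytope G"
  let ?S = "perm_mat ` G"
  have "perm_polytope (wreath_S2 G) = convex hull
      (convex hull (block_diag ` (?S \<times> ?S)) \<union> convex hull (block_antidiag ` (?S \<times> ?S)))"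
    unfolding perm_polytope_def perm_mat_wreath_S2 by (rule hull_Un) (simp add: convex_Inter)
  also have "\<dots> = convex hull (block_diag ` (?P \<times> ?P) \<union> block_antidiag ` (?P \<times> ?P))"
    by (simp only: convex_hull_block_diag convex_hull_block_antidiag perm_polytope_def)
  also have "\<dots> = {u *\<^sub>R D + v *\<^sub>R A | u v D A. u \<ge> 0 \<and> v \<ge> 0 \<and> u + v = 1
      \<and> D \<in> block_diag ` (?P \<times> ?P) \<and> A \<in> block_antidiag ` (?P \<times> ?P)}"
    using assms
    by (intro convex_hull_union_two convex_linear_image linear_block_diag linear_block_antidiag
        convex_Times convex_convex_hull) (auto simp: perm_polytope_def)
  also have "\<dots> = {block_mat (u *\<^sub>R X1) (v *\<^sub>R Y1) (v *\<^sub>R Y2) (u *\<^sub>R X2) | u v X1 X2 Y1 Y2.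
       u \<ge> 0 \<and> v \<ge> 0 \<and> u + v = 1 \<and> X1 \<in> ?P \<and> X2 \<in> ?P \<and> Y1 \<in> ?P \<and> Y2 \<in> ?P}"
    unfolding scaleR_block_diag_add_block_antidiag[symmetric] by blast
  finally show ?thesis .
qed

definition lattice_points :: "'a::euclidean_space set \<Rightarrow> nat \<Rightarrow> 'a set" where
  "lattice_points P t = {x \<in> (\<lambda>y. real t *\<^sub>R y) ` P. \<forall>b\<in>Basis. x \<bullet> b \<in> \<int>}"

lemma ehrhart_eq_card_lattice_points: "ehrhart P t = card (lattice_points P t)"
  by (simp add: ehrhart_def lattice_points_def)

lemma matrix_inner_Basis_Ints_iff:
  "(\<forall>b\<in>Basis. (A::real^'m^'k) \<bullet> b \<in> \<int>) \<longleftrightarrow> (\<forall>i j. A$i$j \<in> \<int>)"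
  by (auto simp: Basis_vec_def inner_axis)

lemma mem_lattice_points_matrix_iff:
  "(A::real^'m^'k) \<in> lattice_points P t \<longleftrightarrow> (\<exists>X\<in>P. A = real t *\<^sub>R X) \<and> (\<forall>i j. A$i$j \<in> \<int>)"
  by (auto simp: lattice_points_def matrix_inner_Basis_Ints_iff)

lemma finite_vec_entries_in:
  assumes "finite F"
  shows "finite {v::'a^'m::finite. \<forall>i. v$i \<in> F}"
proof (rule finite_subset)
  show "{v::'a^'m. \<forall>i. v$i \<in> F} \<subseteq> vec_lambda ` Pi\<^sub>E UNIV (\<lambda>_. F)"
    by (auto intro!: image_eqI[of _ _ "vec_nth _"] simp: vec_lambda_eta)
qed (use assms in \<open>simp add: finite_PiE\<close>)

lemma finite_matrix_entries_in:
  assumes "finite F"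
  shows "finite {A::'a^'m::finite^'k::finite. \<forall>i j. A$i$j \<in> F}"
  using finite_vec_entries_in[OF finite_vec_entries_in[OF assms]] by simp

lemma finite_lattice_points_perm_polytope: "finite (lattice_points (perm_polytope G) t)"
proof (rule finite_subset)
  show "lattice_points (perm_polytope G) t \<subseteq> {A. \<forall>i j. A$i$j \<in> {x \<in> \<int>. 0 \<le> x \<and> x \<le> real t}}"
  proof
    fix A assume "A \<in> lattice_points (perm_polytope G) t"
    then obtain X where X: "X \<in> perm_polytope G" "A = real t *\<^sub>R X"
      and integral: "\<forall>i j. A$i$j \<in> \<int>"
      by (auto simp: mem_lattice_points_matrix_iff)
    have "0 \<le> A$i$j \<and> A$i$j \<le> real t" for i j
      using perm_polytope_row_stochastic[OF X(1), of i j] X(2) by (simp add: mult_left_le)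
    with integral show "A \<in> {A. \<forall>i j. A$i$j \<in> {x \<in> \<int>. 0 \<le> x \<and> x \<le> real t}}" by blast
  qed
qed (intro finite_matrix_entries_in finite_int_segment)

lemma lattice_points_perm_polytope_row_sum:
  "A \<in> lattice_points (perm_polytope G) t \<Longrightarrow> (\<Sum>j\<in>UNIV. A$i$j) = real t"
  using perm_polytope_row_stochastic[of _ G i]
  by (auto simp: mem_lattice_points_matrix_iff sum_distrib_left[symmetric])

lemma disjoint_lattice_points_perm_polytope:
  fixes G :: "('n::finite \<Rightarrow> 'n) set"
  assumes "s \<noteq> t"
  shows "lattice_points (perm_polytope G) s \<inter> lattice_points (perm_polytope G) t = {}"
proof (intro equals0I)
  fix A assume "A \<in> lattice_points (perm_polytope G) s \<inter> lattice_points (perm_polytope G) t"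
  then have "real s = real t"
    using lattice_points_perm_polytope_row_sum[of A G s "undefined :: 'n"]
      lattice_points_perm_polytope_row_sum[of A G t "undefined :: 'n"] by simp
  with assms show False by simp
qed

lemma lattice_point_wreath_S2_decompose:
  assumes "G \<noteq> {}" and "x \<in> lattice_points (perm_polytope (wreath_S2 G)) t"
  obtains k A1 A2 B1 B2 where "k \<le> t"
    and "A1 \<in> lattice_points (perm_polytope G) k" "A2 \<in> lattice_points (perm_polytope G) k"
    and "B1 \<in> lattice_points (perm_polytope G) (t - k)" "B2 \<in> lattice_points (perm_polytope G) (t - k)"
    and "x = block_mat A1 B1 B2 A2"
proof -
  let ?P = "perm_polytope G"
  obtain Y where Y: "Y \<in> perm_polytope (wreath_S2 G)" "x = real t *\<^sub>R Y"
    and integral: "\<forall>i j. x$i$j \<in> \<int>"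
    using assms(2) by (auto simp: mem_lattice_points_matrix_iff)
  from Y(1) obtain u v X1 X2 Y1 Y2 where uv: "u \<ge> 0" "v \<ge> 0" "u + v = 1"
    and in_P: "X1 \<in> ?P" "X2 \<in> ?P" "Y1 \<in> ?P" "Y2 \<in> ?P"
    and Y_eq: "Y = block_mat (u *\<^sub>R X1) (v *\<^sub>R Y1) (v *\<^sub>R Y2) (u *\<^sub>R X2)"
    unfolding perm_polytope_wreath_S2[OF assms(1)] by blast
  define a b where "a = real t * u" and "b = real t * v"
  have x: "x = block_mat (a *\<^sub>R X1) (b *\<^sub>R Y1) (b *\<^sub>R Y2) (a *\<^sub>R X2)"
    using Y(2) Y_eq by (simp add: scaleR_block_mat a_def b_def)
  have integral_blocks: "\<forall>i j. (a *\<^sub>R X1)$i$j \<in> \<int>" "\<forall>i j. (a *\<^sub>R X2)$i$j \<in> \<int>"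
    "\<forall>i j. (b *\<^sub>R Y1)$i$j \<in> \<int>" "\<forall>i j. (b *\<^sub>R Y2)$i$j \<in> \<int>"
    using integral unfolding x block_mat_integral_iff by blast+
  have "a \<in> \<int>" "a \<ge> 0"
    using integral_scale_of_perm_polytope[OF in_P(1) integral_blocks(1)] uv by (simp_all add: a_def)
  then obtain k :: nat where a: "a = real k"
    by (metis Ints_cases nonneg_int_cases of_int_0_le_iff of_int_of_nat_eq)
  have "a + b = real t"
    using uv(3) by (simp add: a_def b_def flip: distrib_left)
  then have b_diff: "b = real t - real k"
    using a by linarith
  moreover have "b \<ge> 0"
    using uv(2) by (simp add: b_def)
  ultimately have "k \<le> t"
    by simp
  with b_diff have b: "b = real (t - k)"
    by (simp add: of_nat_diff)
  show thesis
  proof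
    show "k \<le> t" by fact
    show "x = block_mat (a *\<^sub>R X1) (b *\<^sub>R Y1) (b *\<^sub>R Y2) (a *\<^sub>R X2)" by (fact x)
    show "a *\<^sub>R X1 \<in> lattice_points ?P k" "a *\<^sub>R X2 \<in> lattice_points ?P k"
      using in_P integral_blocks a by (auto simp: mem_lattice_points_matrix_iff)
    show "b *\<^sub>R Y1 \<in> lattice_points ?P (t - k)" "b *\<^sub>R Y2 \<in> lattice_points ?P (t - k)"
      using in_P integral_blocks b by (auto simp: mem_lattice_points_matrix_iff)
  qed
qed

lemma block_mat_mem_lattice_points_wreath_S2:
  assumes "G \<noteq> {}" and "k \<le> t" and "0 < t"
    and "A1 \<in> lattice_points (perm_polytope G) k" "A2 \<in> lattice_points (perm_polytope G) k"
    and "B1 \<in> lattice_points (perm_polytope G) (t - k)" "B2 \<in> lattice_points (perm_polytope G) (t - k)"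
  shows "block_mat A1 B1 B2 A2 \<in> lattice_points (perm_polytope (wreath_S2 G)) t"
proof -
  let ?P = "perm_polytope G"
  obtain X1 X2 Y1 Y2 where in_P: "X1 \<in> ?P" "X2 \<in> ?P" "Y1 \<in> ?P" "Y2 \<in> ?P"
    and blocks: "A1 = real k *\<^sub>R X1" "A2 = real k *\<^sub>R X2"
      "B1 = real (t - k) *\<^sub>R Y1" "B2 = real (t - k) *\<^sub>R Y2"
    using assms(4-7) by (auto simp: mem_lattice_points_matrix_iff)
  define u v where "u = real k / real t" and "v = real (t - k) / real t"
  have uv: "u \<ge> 0" "v \<ge> 0" "u + v = 1"
    using assms(2,3) by (auto simp: u_def v_def field_simps of_nat_diff)
  have "block_mat (u *\<^sub>R X1) (v *\<^sub>R Y1) (v *\<^sub>R Y2) (u *\<^sub>R X2) \<in> perm_polytope (wreath_S2 G)"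
    unfolding perm_polytope_wreath_S2[OF assms(1)] using uv in_P by blast
  moreover have "block_mat A1 B1 B2 A2 = real t *\<^sub>R block_mat (u *\<^sub>R X1) (v *\<^sub>R Y1) (v *\<^sub>R Y2) (u *\<^sub>R X2)"
    using assms(3) by (simp add: blocks scaleR_block_mat u_def v_def)
  moreover have "\<forall>i j. block_mat A1 B1 B2 A2 $ i $ j \<in> \<int>"
    unfolding block_mat_integral_iff using assms(4-7) by (simp add: mem_lattice_points_matrix_iff)
  ultimately show ?thesis by (auto simp: mem_lattice_points_matrix_iff)
qed

lemma lattice_points_wreath_S2:
  assumes "G \<noteq> {}" and "0 < t"
  shows "lattice_points (perm_polytope (wreath_S2 G)) t =
    (\<lambda>((A1, A2), B1, B2). block_mat A1 B1 B2 A2) `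
      (\<Union>k\<in>{0..t}. (lattice_points (perm_polytope G) k \<times> lattice_points (perm_polytope G) k) \<times>
        (lattice_points (perm_polytope G) (t - k) \<times> lattice_points (perm_polytope G) (t - k)))"
proof (intro equalityI subsetI)
  fix x assume "x \<in> lattice_points (perm_polytope (wreath_S2 G)) t"
  then obtain k A1 A2 B1 B2 where "k \<le> t"
    "A1 \<in> lattice_points (perm_polytope G) k" "A2 \<in> lattice_points (perm_polytope G) k"
    "B1 \<in> lattice_points (perm_polytope G) (t - k)" "B2 \<in> lattice_points (perm_polytope G) (t - k)"
    "x = block_mat A1 B1 B2 A2"
    by (rule lattice_point_wreath_S2_decompose[OF assms(1)])
  then show "x \<in> (\<lambda>((A1, A2), B1, B2). block_mat A1 B1 B2 A2) `
      (\<Union>k\<in>{0..t}. (lattice_points (perm_polytope G) k \<times> lattice_points (perm_polytope G) k) \<times>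
        (lattice_points (perm_polytope G) (t - k) \<times> lattice_points (perm_polytope G) (t - k)))"
    by (intro image_eqI[where x = "((A1, A2), B1, B2)"]) auto
next
  fix x assume "x \<in> (\<lambda>((A1, A2), B1, B2). block_mat A1 B1 B2 A2) `
      (\<Union>k\<in>{0..t}. (lattice_points (perm_polytope G) k \<times> lattice_points (perm_polytope G) k) \<times>
        (lattice_points (perm_polytope G) (t - k) \<times> lattice_points (perm_polytope G) (t - k)))"
  then obtain k A1 A2 B1 B2 where "k \<le> t"
    "A1 \<in> lattice_points (perm_polytope G) k" "A2 \<in> lattice_points (perm_polytope G) k"
    "B1 \<in> lattice_points (perm_polytope G) (t - k)" "B2 \<in> lattice_points (perm_polytope G) (t - k)"
    "x = block_mat A1 B1 B2 A2"
    by auto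
  then show "x \<in> lattice_points (perm_polytope (wreath_S2 G)) t"
    using block_mat_mem_lattice_points_wreath_S2[OF assms(1) _ assms(2)] by blast
qed

theorem theorem3:
  fixes G :: "('n::finite \<Rightarrow> 'n) set" and t :: nat
  assumes "subgroup G (BijGroup (UNIV :: 'n set))"
    and "t \<ge> 2"
  shows "ehrhart (perm_polytope (wreath_S2 G)) t =
           (\<Sum>k = 0..t. (ehrhart (perm_polytope G) k)\<^sup>2 * (ehrhart (perm_polytope G) (t - k))\<^sup>2)"
proof -
  let ?L = "lattice_points (perm_polytope G)"
  let ?S = "\<lambda>k. (?L k \<times> ?L k) \<times> (?L (t - k) \<times> ?L (t - k))"
  have G: "G \<noteq> {}"
    using subgroup.one_closed[OF assms(1)] by blast
  have t: "0 < t"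
    using assms(2) by simp
  have finite_S: "finite (?S k)" for k
    by (simp add: finite_lattice_points_perm_polytope)
  have disjoint_S: "?S k \<inter> ?S k' = {}" if "k \<noteq> k'" for k k'
    using disjoint_lattice_points_perm_polytope[OF that, of G] by blast
  have "ehrhart (perm_polytope (wreath_S2 G)) t =
      card ((\<lambda>((A1, A2), B1, B2). block_mat A1 B1 B2 A2) ` (\<Union>k\<in>{0..t}. ?S k))"
    unfolding ehrhart_eq_card_lattice_points lattice_points_wreath_S2[OF G t] ..
  also have "\<dots> = card (\<Union>k\<in>{0..t}. ?S k)"
    by (intro card_image inj_onI) (auto simp: block_mat_eq_iff)
  also have "\<dots> = (\<Sum>k = 0..t. card (?S k))"
    by (rule card_UN_disjoint) (auto intro: finite_S dest: disjoint_S)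
  also have "\<dots> = (\<Sum>k = 0..t. (ehrhart (perm_polytope G) k)\<^sup>2 * (ehrhart (perm_polytope G) (t - k))\<^sup>2)"
    by (simp add: ehrhart_eq_card_lattice_points card_cartesian_product power2_eq_square)
  finally show ?thesis .
qed

end
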